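(* Let $\mathcal{Q}$ be a small involutive quantaloid and $\Psi\colon\mathbb{A}\to\mathbb{B}$ a left adjoint distributor between $\mathcal{Q}$-categories, with right adjoint $\Psi^*$. Let $\Psi_{\mathsf s}\colon\mathbb{A}_{\mathsf s}\to\mathbb{B}_{\mathsf s}$ be the distributor $\Psi_{\mathsf s}=(\mathbb{B}(S_{\mathbb{B}}-,-)\otimes\Psi\otimes\mathbb{A}(-,S_{\mathbb{A}}-))\wedge(\mathbb{A}(S_{\mathbb{A}}-,-)\otimes\Psi^*\otimes\mathbb{B}(-,S_{\mathbb{B}}-))^{\mathsf o}$, i.e. $\Psi_{\mathsf s}(b,a)=\Psi(b,a)\wedge\Psi^*(a,b)^{\mathsf o}$. Then $\Psi_{\mathsf s}\otimes(\Psi_{\mathsf s})^{\mathsf o}\le\mathbb{B}_{\mathsf s}$. Consequently $\Psi_{\mathsf s}$ is a symmetric left adjoint if and only if $\mathbb{A}_{\mathsf s}\le(\Psi_{\mathsf s})^{\mathsf o}\otimes\Psi_{\mathsf s}$; and if this holds, then $\Psi=\mathbb{B}(-,S_{\mathbb{B}}-)\otimes\Psi_{\mathsf s}\otimes\mathbb{A}(S_{\mathbb{A}}-,-)$, i.e. $\Psi(b,a)=\bigvee_{a'\in\mathbb{A}_0,b'\in\mathbb{B}_0}\mathbb{B}(b,b')\circ\Psi_{\mathsf s}(b',a')\circ\mathbb{A}(a',a)$ for all $a,b$.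
   Context: A quantaloid is a category enriched in $\mathsf{Sup}$; an involution is an identity-on-objects, direction-reversing, monotone map $f\mapsto f^{\mathsf o}$ on morphisms with $(g\circ f)^{\mathsf o}=f^{\mathsf o}\circ g^{\mathsf o}$, $f^{\mathsf{oo}}=f$. A $\mathcal{Q}$-category $\mathbb{A}$: objects with types $tx$, homs $\mathbb{A}(y,x)\colon tx\to ty$ with $\mathbb{A}(z,y)\circ\mathbb{A}(y,x)\le\mathbb{A}(z,x)$, $1_{tx}\le\mathbb{A}(x,x)$; symmetric if $\mathbb{A}(x,y)=\mathbb{A}(y,x)^{\mathsf o}$. Symmetrisation $\mathbb{A}_{\mathsf s}$: same objects and types, $\mathbb{A}_{\mathsf s}(y,x)=\mathbb{A}(y,x)\wedge\mathbb{A}(x,y)^{\mathsf o}$ (symmetric); $S_{\mathbb{A}}\colon\mathbb{A}_{\mathsf s}\to\mathbb{A}$ is the identity on objects. Distributors $\Phi\colon\mathbb{A}\to\mathbb{B}$: arrows $\Phi(y,x)\colon tx\to ty$ with $\mathbb{B}(y',y)\circ\Phi(y,x)\le\Phi(y',x)$, $\Phi(y,x)\circ\mathbb{A}(x,x')\le\Phi(y,x')$; composition $(\Psi\otimes\Phi)(z,x)=\bigvee_y\Psi(z,y)\circ\Phi(y,x)$, identities the hom-families, elementwise order and infima. $\Phi$ is a left adjoint with right adjoint $\Phi^*$ if $\mathbb{A}\le\Phi^*\otimes\Phi$ and $\Phi\otimes\Phi^*\le\mathbb{B}$. $\mathbb{A}(-,S_{\mathbb{A}}-)\colon\mathbb{A}_{\mathsf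 s}\to\mathbb{A}$ and $\mathbb{A}(S_{\mathbb{A}}-,-)\colon\mathbb{A}\to\mathbb{A}_{\mathsf s}$ both have elements $\mathbb{A}(y,x)$. For a distributor $\Phi$ between symmetric $\mathcal{Q}$-categories, $\Phi^{\mathsf o}(x,y)=\Phi(y,x)^{\mathsf o}$, and $\Phi$ is a symmetric left adjoint if it is left adjoint to $\Phi^{\mathsf o}$. *)

theory Defs
  imports Main
begin

text \<open>A (small) quantaloid: objects of type 'o, morphisms of type 'm.
  qhom X Y is the hom-set of arrows X -> Y; qcomp g f is g o f;
  qle is the order, qsup X Y S the join in qhom X Y; qinv is the involution.\<close>

record ('o, 'm) quantaloid =
  qhom  :: "'o \<Rightarrow> 'o \<Rightarrow> 'm set"
  qcomp :: "'m \<Rightarrow> 'm \<Rightarrow> 'm"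
  qid   :: "'o \<Rightarrow> 'm"
  qle   :: "'m \<Rightarrow> 'm \<Rightarrow> bool"
  qsup  :: "'o \<Rightarrow> 'o \<Rightarrow> 'm set \<Rightarrow> 'm"
  qinv  :: "'m \<Rightarrow> 'm"

definition quantaloid :: "('o, 'm, 'z) quantaloid_scheme \<Rightarrow> bool" where
  "quantaloid Q \<longleftrightarrow>
     (\<forall>X. qid Q X \<in> qhom Q X X) \<and>
     (\<forall>X Y Z f g. f \<in> qhom Q X Y \<longrightarrow> g \<in> qhom Q Y Z \<longrightarrow> qcomp Q g f \<in> qhom Q X Z) \<and>
     (\<forall>W X Y Z f g h. f \<in> qhom Q W X \<longrightarrow> g \<in> qhom Q X Y \<longrightarrow> h \<in> qhom Q Y Z \<longrightarrow>
        qcomp Q h (qcomp Q g f) = qcomp Q (qcomp Q h g) f) \<and>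
     (\<forall>X Y f. f \<in> qhom Q X Y \<longrightarrow> qcomp Q f (qid Q X) = f \<and> qcomp Q (qid Q Y) f = f) \<and>
     (\<forall>X Y f. f \<in> qhom Q X Y \<longrightarrow> qle Q f f) \<and>
     (\<forall>X Y f g. f \<in> qhom Q X Y \<longrightarrow> g \<in> qhom Q X Y \<longrightarrow> qle Q f g \<longrightarrow> qle Q g f \<longrightarrow> f = g) \<and>
     (\<forall>X Y f g h. f \<in> qhom Q X Y \<longrightarrow> g \<in> qhom Q X Y \<longrightarrow> h \<in> qhom Q X Y \<longrightarrow>
        qle Q f g \<longrightarrow> qle Q g h \<longrightarrow> qle Q f h) \<and>
     (\<forall>X Y S. S \<subseteq> qhom Q X Y \<longrightarrow>
        qsup Q X Y S \<in> qhom Q X Y \<and>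
        (\<forall>f\<in>S. qle Q f (qsup Q X Y S)) \<and>
        (\<forall>g\<in>qhom Q X Y. (\<forall>f\<in>S. qle Q f g) \<longrightarrow> qle Q (qsup Q X Y S) g)) \<and>
     (\<forall>X Y Z S g. S \<subseteq> qhom Q X Y \<longrightarrow> g \<in> qhom Q Y Z \<longrightarrow>
        qcomp Q g (qsup Q X Y S) = qsup Q X Z ((\<lambda>f. qcomp Q g f) ` S)) \<and>
     (\<forall>X Y Z S g. S \<subseteq> qhom Q Y Z \<longrightarrow> g \<in> qhom Q X Y \<longrightarrow>
        qcomp Q (qsup Q Y Z S) g = qsup Q X Z ((\<lambda>f. qcomp Q f g) ` S))"

definition involutive_quantaloid :: "('o, 'm, 'z) quantaloid_scheme \<Rightarrow> bool" where
  "involutive_quantaloid Q \<longleftrightarrow> quantaloid Q \<and>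
     (\<forall>X Y f. f \<in> qhom Q X Y \<longrightarrow> qinv Q f \<in> qhom Q Y X) \<and>
     (\<forall>X Y f g. f \<in> qhom Q X Y \<longrightarrow> g \<in> qhom Q X Y \<longrightarrow> qle Q f g \<longrightarrow> qle Q (qinv Q f) (qinv Q g)) \<and>
     (\<forall>X Y Z f g. f \<in> qhom Q X Y \<longrightarrow> g \<in> qhom Q Y Z \<longrightarrow>
        qinv Q (qcomp Q g f) = qcomp Q (qinv Q f) (qinv Q g)) \<and>
     (\<forall>X Y f. f \<in> qhom Q X Y \<longrightarrow> qinv Q (qinv Q f) = f)"

definition qmeet :: "('o, 'm, 'z) quantaloid_scheme \<Rightarrow> 'o \<Rightarrow> 'o \<Rightarrow> 'm \<Rightarrow> 'm \<Rightarrow> 'm" where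
  "qmeet Q X Y f g = qsup Q X Y {h \<in> qhom Q X Y. qle Q h f \<and> qle Q h g}"

text \<open>Q-categories: objects, types, homs (hm y x : t x -> t y).\<close>
record ('x, 'o, 'm) qcat =
  obj :: "'x set"
  ty  :: "'x \<Rightarrow> 'o"
  hm  :: "'x \<Rightarrow> 'x \<Rightarrow> 'm"

definition qcategory :: "('o, 'm, 'z) quantaloid_scheme \<Rightarrow> ('x, 'o, 'm) qcat \<Rightarrow> bool" where
  "qcategory Q A \<longleftrightarrow>
     (\<forall>x\<in>obj A. \<forall>y\<in>obj A. hm A y x \<in> qhom Q (ty A x) (ty A y)) \<and>
     (\<forall>x\<in>obj A. \<forall>y\<in>obj A. \<forall>z\<in>obj A. qle Q (qcomp Q (hm A z y) (hm A y x)) (hm A z x)) \<and>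
     (\<forall>x\<in>obj A. qle Q (qid Q (ty A x)) (hm A x x))"

definition symcat :: "('o, 'm, 'z) quantaloid_scheme \<Rightarrow> ('x, 'o, 'm) qcat \<Rightarrow> ('x, 'o, 'm) qcat" where
  "symcat Q A = A\<lparr>hm := (\<lambda>y x. qmeet Q (ty A x) (ty A y) (hm A y x) (qinv Q (hm A x y)))\<rparr>"

definition distributor :: "('o, 'm, 'z) quantaloid_scheme \<Rightarrow> ('x, 'o, 'm) qcat \<Rightarrow> ('y, 'o, 'm) qcat
     \<Rightarrow> ('y \<Rightarrow> 'x \<Rightarrow> 'm) \<Rightarrow> bool" where
  "distributor Q A B \<Phi> \<longleftrightarrow>
     (\<forall>x\<in>obj A. \<forall>y\<in>obj B. \<Phi> y x \<in> qhom Q (ty A x) (ty B y)) \<and>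
     (\<forall>x\<in>obj A. \<forall>y\<in>obj B. \<forall>y'\<in>obj B. qle Q (qcomp Q (hm B y' y) (\<Phi> y x)) (\<Phi> y' x)) \<and>
     (\<forall>x\<in>obj A. \<forall>x'\<in>obj A. \<forall>y\<in>obj B. qle Q (qcomp Q (\<Phi> y x) (hm A x x')) (\<Phi> y x'))"

definition dcomp :: "('o, 'm, 'z) quantaloid_scheme \<Rightarrow> ('x, 'o, 'm) qcat \<Rightarrow> ('y, 'o, 'm) qcat
     \<Rightarrow> ('w, 'o, 'm) qcat \<Rightarrow> ('w \<Rightarrow> 'y \<Rightarrow> 'm) \<Rightarrow> ('y \<Rightarrow> 'x \<Rightarrow> 'm) \<Rightarrow> ('w \<Rightarrow> 'x \<Rightarrow> 'm)" where
  "dcomp Q A B C \<Psi> \<Phi> = (\<lambda>z x. qsup Q (ty A x) (ty C z) ((\<lambda>y. qcomp Q (\<Psi> z y) (\<Phi> y x)) ` obj B))"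

definition dle :: "('o, 'm, 'z) quantaloid_scheme \<Rightarrow> ('x, 'o, 'm) qcat \<Rightarrow> ('y, 'o, 'm) qcat
     \<Rightarrow> ('y \<Rightarrow> 'x \<Rightarrow> 'm) \<Rightarrow> ('y \<Rightarrow> 'x \<Rightarrow> 'm) \<Rightarrow> bool" where
  "dle Q A B \<Phi> \<Phi>' \<longleftrightarrow> (\<forall>x\<in>obj A. \<forall>y\<in>obj B. qle Q (\<Phi> y x) (\<Phi>' y x))"

definition dadjoint :: "('o, 'm, 'z) quantaloid_scheme \<Rightarrow> ('x, 'o, 'm) qcat \<Rightarrow> ('y, 'o, 'm) qcat
     \<Rightarrow> ('y \<Rightarrow> 'x \<Rightarrow> 'm) \<Rightarrow> ('x \<Rightarrow> 'y \<Rightarrow> 'm) \<Rightarrow> bool" where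
  "dadjoint Q A B \<Phi> \<Phi>' \<longleftrightarrow>
     dle Q A A (hm A) (dcomp Q A B A \<Phi>' \<Phi>) \<and> dle Q B B (dcomp Q B A B \<Phi> \<Phi>') (hm B)"

definition dinv :: "('o, 'm, 'z) quantaloid_scheme \<Rightarrow> ('y \<Rightarrow> 'x \<Rightarrow> 'm) \<Rightarrow> ('x \<Rightarrow> 'y \<Rightarrow> 'm)" where
  "dinv Q \<Phi> = (\<lambda>x y. qinv Q (\<Phi> y x))"

definition sym_left_adjoint :: "('o, 'm, 'z) quantaloid_scheme \<Rightarrow> ('x, 'o, 'm) qcat \<Rightarrow> ('y, 'o, 'm) qcat
     \<Rightarrow> ('y \<Rightarrow> 'x \<Rightarrow> 'm) \<Rightarrow> bool" where
  "sym_left_adjoint Q A B \<Phi> \<longleftrightarrow> dadjoint Q A B \<Phi> (dinv Q \<Phi>)"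

definition symdist :: "('o, 'm, 'z) quantaloid_scheme \<Rightarrow> ('x, 'o, 'm) qcat \<Rightarrow> ('y, 'o, 'm) qcat
     \<Rightarrow> ('y \<Rightarrow> 'x \<Rightarrow> 'm) \<Rightarrow> ('x \<Rightarrow> 'y \<Rightarrow> 'm) \<Rightarrow> ('y \<Rightarrow> 'x \<Rightarrow> 'm)" where
  "symdist Q A B \<Psi> \<Psi>' = (\<lambda>b a. qmeet Q (ty A a) (ty B b) (\<Psi> b a) (qinv Q (\<Psi>' a b)))"

end

theory Submission
  imports Defs
begin

text \<open>Since Psi_s <= Psi and Psi_s^o <= Psi^*, the counit of the adjunction gives
  Psi_s (x) Psi_s^o <= Psi (x) Psi^* <= B; the left-hand side is invariant under the
  involution, so it also lies below B^o and hence below B_s = B /\ B^o. This is one of the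
  two adjunction inequalities, so Psi_s is a symmetric left adjoint iff the other (unit)
  inequality holds. The unit at a says 1 <= \<Or>_b' Psi_s(b',a)^o o Psi_s(b',a); composing
  with Psi(b,a) and using Psi(b,a) o Psi_s(b',a)^o <= Psi(b,a) o Psi^*(a,b') <= B(b,b') yields
  Psi(b,a) <= \<Or>_b' B(b,b') o Psi_s(b',a). The reverse inequality is Psi_s <= Psi together
  with the actions of A and B on Psi.\<close>

lemma obj_symcat [simp]: "obj (symcat Q A) = obj A"
  by (simp add: symcat_def)

lemma ty_symcat [simp]: "ty (symcat Q A) = ty A"
  by (simp add: symcat_def)

lemma hm_symcat: "hm (symcat Q A) y x = qmeet Q (ty A x) (ty A y) (hm A y x) (qinv Q (hm A x y))"
  by (simp add: symcat_def)

locale inv_quantaloid =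
  fixes Q :: "('o, 'm, 'z) quantaloid_scheme"
  assumes involutive: "involutive_quantaloid Q"
begin

lemmas involutive_unfolded = involutive[unfolded involutive_quantaloid_def quantaloid_def]

lemma id_closed: "qid Q X \<in> qhom Q X X"
  using involutive_unfolded by metis

lemma comp_closed: "f \<in> qhom Q X Y \<Longrightarrow> g \<in> qhom Q Y Z \<Longrightarrow> qcomp Q g f \<in> qhom Q X Z"
  using involutive_unfolded by metis

lemma comp_assoc: "f \<in> qhom Q W X \<Longrightarrow> g \<in> qhom Q X Y \<Longrightarrow> h \<in> qhom Q Y Z \<Longrightarrow>
      qcomp Q h (qcomp Q g f) = qcomp Q (qcomp Q h g) f"
  using involutive_unfolded by metis

lemma comp_id_right: "f \<in> qhom Q X Y \<Longrightarrow> qcomp Q f (qid Q X) = f"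
  using involutive_unfolded by metis

lemma qle_refl: "f \<in> qhom Q X Y \<Longrightarrow> qle Q f f"
  using involutive_unfolded by metis

lemma qle_antisym: "f \<in> qhom Q X Y \<Longrightarrow> g \<in> qhom Q X Y \<Longrightarrow> qle Q f g \<Longrightarrow> qle Q g f \<Longrightarrow> f = g"
  using involutive_unfolded by metis

lemma qle_trans: "f \<in> qhom Q X Y \<Longrightarrow> g \<in> qhom Q X Y \<Longrightarrow> h \<in> qhom Q X Y \<Longrightarrow>
      qle Q f g \<Longrightarrow> qle Q g h \<Longrightarrow> qle Q f h"
  using involutive_unfolded by metis

lemma sup_closed: "S \<subseteq> qhom Q X Y \<Longrightarrow> qsup Q X Y S \<in> qhom Q X Y"
  using involutive_unfolded by metis

lemma sup_upper: "S \<subseteq> qhom Q X Y \<Longrightarrow> f \<in> S \<Longrightarrow> qle Q f (qsup Q X Y S)"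
  using involutive_unfolded by metis

lemma sup_least: "S \<subseteq> qhom Q X Y \<Longrightarrow> g \<in> qhom Q X Y \<Longrightarrow> (\<And>f. f \<in> S \<Longrightarrow> qle Q f g) \<Longrightarrow>
      qle Q (qsup Q X Y S) g"
  using involutive_unfolded by metis

lemma comp_sup_left: "S \<subseteq> qhom Q X Y \<Longrightarrow> g \<in> qhom Q Y Z \<Longrightarrow>
      qcomp Q g (qsup Q X Y S) = qsup Q X Z ((\<lambda>f. qcomp Q g f) ` S)"
  using involutive_unfolded by metis

lemma comp_sup_right: "S \<subseteq> qhom Q Y Z \<Longrightarrow> g \<in> qhom Q X Y \<Longrightarrow>
      qcomp Q (qsup Q Y Z S) g = qsup Q X Z ((\<lambda>f. qcomp Q f g) ` S)"
  using involutive_unfolded by metis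

lemma inv_closed: "f \<in> qhom Q X Y \<Longrightarrow> qinv Q f \<in> qhom Q Y X"
  using involutive_unfolded by metis

lemma inv_mono: "f \<in> qhom Q X Y \<Longrightarrow> g \<in> qhom Q X Y \<Longrightarrow> qle Q f g \<Longrightarrow> qle Q (qinv Q f) (qinv Q g)"
  using involutive_unfolded by metis

lemma inv_comp: "f \<in> qhom Q X Y \<Longrightarrow> g \<in> qhom Q Y Z \<Longrightarrow>
      qinv Q (qcomp Q g f) = qcomp Q (qinv Q f) (qinv Q g)"
  using involutive_unfolded by metis

lemma inv_inv: "f \<in> qhom Q X Y \<Longrightarrow> qinv Q (qinv Q f) = f"
  using involutive_unfolded by metis

lemma inv_id: "qinv Q (qid Q X) = qid Q X"
proof -
  have h: "qinv Q (qid Q X) \<in> qhom Q X X" by (rule inv_closed[OF id_closed])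
  have "qinv Q (qid Q X) = qcomp Q (qinv Q (qid Q X)) (qinv Q (qinv Q (qid Q X)))"
    by (simp add: inv_inv[OF id_closed] comp_id_right[OF h])
  also have "\<dots> = qinv Q (qcomp Q (qinv Q (qid Q X)) (qid Q X))"
    by (rule inv_comp[OF id_closed h, symmetric])
  also have "\<dots> = qid Q X"
    by (simp add: comp_id_right[OF h] inv_inv[OF id_closed])
  finally show ?thesis .
qed

lemma sup_pair_eq: "f \<in> qhom Q X Y \<Longrightarrow> g \<in> qhom Q X Y \<Longrightarrow> qle Q f g \<Longrightarrow> qsup Q X Y {f, g} = g"
  by (rule qle_antisym) (auto intro!: sup_closed sup_least sup_upper qle_refl)

text \<open>Composition is monotone because it preserves binary joins.\<close>

lemma comp_mono_right:
  assumes "f \<in> qhom Q X Y" "f' \<in> qhom Q X Y" "qle Q f f'" "g \<in> qhom Q Y Z"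
  shows "qle Q (qcomp Q g f) (qcomp Q g f')"
proof -
  have "qcomp Q g f' = qcomp Q g (qsup Q X Y {f, f'})"
    using sup_pair_eq assms by simp
  also have "\<dots> = qsup Q X Z {qcomp Q g f, qcomp Q g f'}"
    using comp_sup_left[of "{f, f'}" X Y g Z] assms by simp
  finally have "qcomp Q g f' = qsup Q X Z {qcomp Q g f, qcomp Q g f'}" .
  then show ?thesis
    using sup_upper[of "{qcomp Q g f, qcomp Q g f'}" X Z] assms by (simp add: comp_closed)
qed

lemma comp_mono_left:
  assumes "g \<in> qhom Q Y Z" "g' \<in> qhom Q Y Z" "qle Q g g'" "f \<in> qhom Q X Y"
  shows "qle Q (qcomp Q g f) (qcomp Q g' f)"
proof -
  have "qcomp Q g' f = qcomp Q (qsup Q Y Z {g, g'}) f"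
    using sup_pair_eq assms by simp
  also have "\<dots> = qsup Q X Z {qcomp Q g f, qcomp Q g' f}"
    using comp_sup_right[of "{g, g'}" Y Z f X] assms by simp
  finally have "qcomp Q g' f = qsup Q X Z {qcomp Q g f, qcomp Q g' f}" .
  then show ?thesis
    using sup_upper[of "{qcomp Q g f, qcomp Q g' f}" X Z] assms by (simp add: comp_closed)
qed

lemma comp_mono:
  assumes "f \<in> qhom Q X Y" "f' \<in> qhom Q X Y" "qle Q f f'"
    and "g \<in> qhom Q Y Z" "g' \<in> qhom Q Y Z" "qle Q g g'"
  shows "qle Q (qcomp Q g f) (qcomp Q g' f')"
  by (rule qle_trans[OF _ _ _ comp_mono_right[OF assms(1-4)] comp_mono_left[OF assms(4-6,2)]])
     (use assms in \<open>auto intro: comp_closed\<close>)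

lemma le_comp_of_id_le:
  assumes "f \<in> qhom Q X Y" "u \<in> qhom Q X X" "qle Q (qid Q X) u"
  shows "qle Q f (qcomp Q f u)"
  using comp_mono_right[OF id_closed assms(2,3,1)] comp_id_right[OF assms(1)] by simp

lemma le_sup:
  assumes "S \<subseteq> qhom Q X Y" "g \<in> S" "f \<in> qhom Q X Y" "qle Q f g"
  shows "qle Q f (qsup Q X Y S)"
  by (rule qle_trans[OF assms(3) _ sup_closed[OF assms(1)] assms(4) sup_upper[OF assms(1,2)]])
    (use assms in blast)

lemma sup_le_sup:
  assumes "S \<subseteq> qhom Q X Y" "T \<subseteq> qhom Q X Y" "\<And>f. f \<in> S \<Longrightarrow> \<exists>g\<in>T. qle Q f g"
  shows "qle Q (qsup Q X Y S) (qsup Q X Y T)"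
proof (rule sup_least[OF assms(1) sup_closed[OF assms(2)]])
  fix f assume "f \<in> S"
  then obtain g where "g \<in> T" "qle Q f g" using assms(3) by blast
  then show "qle Q f (qsup Q X Y T)" using le_sup assms(1,2) \<open>f \<in> S\<close> by blast
qed

lemma qmeet_closed: "qmeet Q X Y f g \<in> qhom Q X Y"
  unfolding qmeet_def by (rule sup_closed) blast

lemma qmeet_le1: "f \<in> qhom Q X Y \<Longrightarrow> qle Q (qmeet Q X Y f g) f"
  unfolding qmeet_def by (rule sup_least) auto

lemma qmeet_le2: "g \<in> qhom Q X Y \<Longrightarrow> qle Q (qmeet Q X Y f g) g"
  unfolding qmeet_def by (rule sup_least) auto

lemma qmeet_greatest: "h \<in> qhom Q X Y \<Longrightarrow> qle Q h f \<Longrightarrow> qle Q h g \<Longrightarrow> qle Q h (qmeet Q X Y f g)"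
  unfolding qmeet_def by (rule sup_upper) auto

lemma symcat_closed: "hm (symcat Q A) y x \<in> qhom Q (ty A x) (ty A y)"
  unfolding hm_symcat by (rule qmeet_closed)

lemma symcat_id_le:
  assumes "qcategory Q A" "x \<in> obj A"
  shows "qle Q (qid Q (ty A x)) (hm (symcat Q A) x x)"
proof -
  have hom: "hm A x x \<in> qhom Q (ty A x) (ty A x)" and id_le: "qle Q (qid Q (ty A x)) (hm A x x)"
    using assms unfolding qcategory_def by blast+
  have "qle Q (qid Q (ty A x)) (qinv Q (hm A x x))"
    using inv_mono[OF id_closed hom id_le] by (simp add: inv_id)
  then show ?thesis
    unfolding hm_symcat by (auto intro: qmeet_greatest id_closed id_le)
qed

end

locale adjoint_distributors = inv_quantaloid Q
  for Q :: "('o, 'm, 'z) quantaloid_scheme" +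
  fixes A :: "('a, 'o, 'm) qcat" and B :: "('b, 'o, 'm) qcat"
    and \<Psi> :: "'b \<Rightarrow> 'a \<Rightarrow> 'm" and \<Psi>' :: "'a \<Rightarrow> 'b \<Rightarrow> 'm"
  assumes A_qcategory: "qcategory Q A" and B_qcategory: "qcategory Q B"
    and \<Psi>_distributor: "distributor Q A B \<Psi>" and \<Psi>'_distributor: "distributor Q B A \<Psi>'"
    and adjoint: "dadjoint Q A B \<Psi> \<Psi>'"
begin

abbreviation \<Psi>s :: "'b \<Rightarrow> 'a \<Rightarrow> 'm" where
  "\<Psi>s \<equiv> symdist Q A B \<Psi> \<Psi>'"

lemma A_closed: "x \<in> obj A \<Longrightarrow> y \<in> obj A \<Longrightarrow> hm A y x \<in> qhom Q (ty A x) (ty A y)"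
  using A_qcategory unfolding qcategory_def by blast

lemma B_closed: "x \<in> obj B \<Longrightarrow> y \<in> obj B \<Longrightarrow> hm B y x \<in> qhom Q (ty B x) (ty B y)"
  using B_qcategory unfolding qcategory_def by blast

lemma \<Psi>_closed: "x \<in> obj A \<Longrightarrow> y \<in> obj B \<Longrightarrow> \<Psi> y x \<in> qhom Q (ty A x) (ty B y)"
  using \<Psi>_distributor unfolding distributor_def by blast

lemma \<Psi>'_closed: "x \<in> obj A \<Longrightarrow> y \<in> obj B \<Longrightarrow> \<Psi>' x y \<in> qhom Q (ty B y) (ty A x)"
  using \<Psi>'_distributor unfolding distributor_def by blast

lemma A_id_le: "x \<in> obj A \<Longrightarrow> qle Q (qid Q (ty A x)) (hm A x x)"
  using A_qcategory unfolding qcategory_def by blast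

lemma symdist_closed: "\<Psi>s b a \<in> qhom Q (ty A a) (ty B b)"
  unfolding symdist_def by (rule qmeet_closed)

lemmas closed = comp_closed inv_closed id_closed A_closed B_closed \<Psi>_closed \<Psi>'_closed symdist_closed

lemma \<Psi>_left_action:
  "x \<in> obj A \<Longrightarrow> y \<in> obj B \<Longrightarrow> y' \<in> obj B \<Longrightarrow> qle Q (qcomp Q (hm B y' y) (\<Psi> y x)) (\<Psi> y' x)"
  using \<Psi>_distributor unfolding distributor_def by blast

lemma \<Psi>_right_action:
  "x \<in> obj A \<Longrightarrow> x' \<in> obj A \<Longrightarrow> y \<in> obj B \<Longrightarrow> qle Q (qcomp Q (\<Psi> y x) (hm A x x')) (\<Psi> y x')"
  using \<Psi>_distributor unfolding distributor_def by blast

lemma symdist_le: "a \<in> obj A \<Longrightarrow> b \<in> obj B \<Longrightarrow> qle Q (\<Psi>s b a) (\<Psi> b a)"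
  unfolding symdist_def by (rule qmeet_le1[OF \<Psi>_closed])

lemma inv_symdist_le:
  assumes "a \<in> obj A" "b \<in> obj B"
  shows "qle Q (qinv Q (\<Psi>s b a)) (\<Psi>' a b)"
proof -
  have "qle Q (\<Psi>s b a) (qinv Q (\<Psi>' a b))"
    unfolding symdist_def by (rule qmeet_le2[OF inv_closed[OF \<Psi>'_closed[OF assms]]])
  from inv_mono[OF symdist_closed inv_closed[OF \<Psi>'_closed[OF assms]] this] show ?thesis
    by (simp add: inv_inv[OF \<Psi>'_closed[OF assms]])
qed

lemma adjoint_counit:
  assumes "z \<in> obj B" "x \<in> obj B" "y \<in> obj A"
  shows "qle Q (qcomp Q (\<Psi> z y) (\<Psi>' y x)) (hm B z x)"
proof -
  have S: "(\<lambda>y. qcomp Q (\<Psi> z y) (\<Psi>' y x)) ` obj A \<subseteq> qhom Q (ty B x) (ty B z)"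
    using assms by (auto intro: closed)
  have le_sup: "qle Q (qcomp Q (\<Psi> z y) (\<Psi>' y x)) (dcomp Q B A B \<Psi> \<Psi>' z x)"
    unfolding dcomp_def by (rule sup_upper[OF S]) (use assms in blast)
  have sup_le: "qle Q (dcomp Q B A B \<Psi> \<Psi>' z x) (hm B z x)"
    using adjoint assms unfolding dadjoint_def dle_def by blast
  have hom: "dcomp Q B A B \<Psi> \<Psi>' z x \<in> qhom Q (ty B x) (ty B z)"
    unfolding dcomp_def by (rule sup_closed[OF S])
  show ?thesis
    by (rule qle_trans[OF _ hom _ le_sup sup_le]) (use assms in \<open>auto intro: closed\<close>)
qed

lemma symdist_comp_inv_le:
  assumes "z \<in> obj B" "x \<in> obj B" "y \<in> obj A"
  shows "qle Q (qcomp Q (\<Psi>s z y) (qinv Q (\<Psi>s x y))) (hm B z x)"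
  by (rule qle_trans[OF _ _ _ comp_mono[OF _ _ inv_symdist_le _ _ symdist_le] adjoint_counit])
     (use assms in \<open>auto intro: closed\<close>)

lemma symdist_comp_inv_le_symcat:
  assumes "z \<in> obj B" "x \<in> obj B" "y \<in> obj A"
  shows "qle Q (qcomp Q (\<Psi>s z y) (qinv Q (\<Psi>s x y))) (hm (symcat Q B) z x)"
proof -
  have "qinv Q (qcomp Q (\<Psi>s x y) (qinv Q (\<Psi>s z y))) = qcomp Q (\<Psi>s z y) (qinv Q (\<Psi>s x y))"
    by (simp add: inv_comp[OF inv_closed[OF symdist_closed[of z y]] symdist_closed[of x y]]
        inv_inv[OF symdist_closed])
  moreover have "qle Q (qinv Q (qcomp Q (\<Psi>s x y) (qinv Q (\<Psi>s z y)))) (qinv Q (hm B x z))"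
    using assms by (intro inv_mono symdist_comp_inv_le) (auto intro: closed)
  ultimately show ?thesis
    unfolding hm_symcat using assms by (auto intro: qmeet_greatest symdist_comp_inv_le closed)
qed

lemma symdist_comp_dinv_le:
  "dle Q (symcat Q B) (symcat Q B)
     (dcomp Q (symcat Q B) (symcat Q A) (symcat Q B) \<Psi>s (dinv Q \<Psi>s)) (hm (symcat Q B))"
proof -
  have "qle Q (qsup Q (ty B x) (ty B z) ((\<lambda>y. qcomp Q (\<Psi>s z y) (qinv Q (\<Psi>s x y))) ` obj A))
          (hm (symcat Q B) z x)" if "x \<in> obj B" "z \<in> obj B" for x z
    using that by (intro sup_least)
      (auto intro: closed symcat_closed symdist_comp_inv_le_symcat)
  then show ?thesis
    unfolding dle_def dcomp_def dinv_def by simp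
qed

lemma sym_left_adjoint_symdist_iff:
  "sym_left_adjoint Q (symcat Q A) (symcat Q B) \<Psi>s \<longleftrightarrow>
     dle Q (symcat Q A) (symcat Q A) (hm (symcat Q A))
       (dcomp Q (symcat Q A) (symcat Q B) (symcat Q A) (dinv Q \<Psi>s) \<Psi>s)"
  unfolding sym_left_adjoint_def dadjoint_def using symdist_comp_dinv_le by blast

lemma sym_left_adjoint_unit:
  assumes "sym_left_adjoint Q (symcat Q A) (symcat Q B) \<Psi>s" "a \<in> obj A"
  shows "qle Q (qid Q (ty A a))
           (qsup Q (ty A a) (ty A a) ((\<lambda>b. qcomp Q (qinv Q (\<Psi>s b a)) (\<Psi>s b a)) ` obj B))"
proof -
  have S: "(\<lambda>b. qcomp Q (qinv Q (\<Psi>s b a)) (\<Psi>s b a)) ` obj B \<subseteq> qhom Q (ty A a) (ty A a)"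
    by (auto intro: closed)
  have unit: "qle Q (hm (symcat Q A) a a)
                (qsup Q (ty A a) (ty A a) ((\<lambda>b. qcomp Q (qinv Q (\<Psi>s b a)) (\<Psi>s b a)) ` obj B))"
    using assms unfolding sym_left_adjoint_symdist_iff dle_def dcomp_def dinv_def by simp
  show ?thesis
    by (rule qle_trans[OF id_closed symcat_closed sup_closed[OF S]
          symcat_id_le[OF A_qcategory assms(2)] unit])
qed

lemma symdist_conjugate_le:
  assumes "a \<in> obj A" "a' \<in> obj A" "b \<in> obj B" "b' \<in> obj B"
  shows "qle Q (qcomp Q (hm B b b') (qcomp Q (\<Psi>s b' a') (hm A a' a))) (\<Psi> b a)"
proof -
  have le1: "qle Q (qcomp Q (hm B b b') (qcomp Q (\<Psi>s b' a') (hm A a' a)))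
               (qcomp Q (hm B b b') (qcomp Q (\<Psi> b' a') (hm A a' a)))"
    using assms by (intro comp_mono_right comp_mono_left symdist_le) (auto intro: closed)
  have le2: "qle Q (qcomp Q (hm B b b') (qcomp Q (\<Psi> b' a') (hm A a' a))) (qcomp Q (hm B b b') (\<Psi> b' a))"
    using assms by (intro comp_mono_right \<Psi>_right_action) (auto intro: closed)
  have le3: "qle Q (qcomp Q (hm B b b') (\<Psi> b' a)) (\<Psi> b a)"
    using assms by (intro \<Psi>_left_action)
  show ?thesis
    by (rule qle_trans[OF _ _ _ le1 qle_trans[OF _ _ _ le2 le3]]) (use assms in \<open>auto intro: closed\<close>)
qed

lemma comp_inv_symdist_symdist_le:
  assumes "a \<in> obj A" "b \<in> obj B" "b' \<in> obj B"
  shows "qle Q (qcomp Q (\<Psi> b a) (qcomp Q (qinv Q (\<Psi>s b' a)) (\<Psi>s b' a)))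
           (qcomp Q (hm B b b') (qcomp Q (\<Psi>s b' a) (hm A a a)))"
proof -
  have counit: "qle Q (qcomp Q (\<Psi> b a) (qinv Q (\<Psi>s b' a))) (hm B b b')"
    by (rule qle_trans[OF _ _ _ comp_mono_right[OF _ _ inv_symdist_le] adjoint_counit])
      (use assms in \<open>auto intro: closed\<close>)
  have assoc: "qcomp Q (\<Psi> b a) (qcomp Q (qinv Q (\<Psi>s b' a)) (\<Psi>s b' a))
      = qcomp Q (qcomp Q (\<Psi> b a) (qinv Q (\<Psi>s b' a))) (\<Psi>s b' a)"
    using assms by (intro comp_assoc) (auto intro: closed)
  have le1: "qle Q (qcomp Q (qcomp Q (\<Psi> b a) (qinv Q (\<Psi>s b' a))) (\<Psi>s b' a))
                   (qcomp Q (hm B b b') (\<Psi>s b' a))"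
    using assms by (intro comp_mono_left counit) (auto intro: closed)
  have le2: "qle Q (qcomp Q (hm B b b') (\<Psi>s b' a))
                   (qcomp Q (hm B b b') (qcomp Q (\<Psi>s b' a) (hm A a a)))"
    using assms by (intro comp_mono_right le_comp_of_id_le) (auto intro: closed A_id_le)
  show ?thesis
    unfolding assoc by (rule qle_trans[OF _ _ _ le1 le2]) (use assms in \<open>auto intro: closed\<close>)
qed

lemma sym_left_adjoint_factorisation:
  assumes "sym_left_adjoint Q (symcat Q A) (symcat Q B) \<Psi>s" "a \<in> obj A" "b \<in> obj B"
  shows "\<Psi> b a = qsup Q (ty A a) (ty B b)
           {qcomp Q (hm B b b') (qcomp Q (\<Psi>s b' a') (hm A a' a)) | a' b'. a' \<in> obj A \<and> b' \<in> obj B}"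
    (is "_ = qsup Q _ _ ?T")
proof -
  let ?U = "(\<lambda>b'. qcomp Q (qinv Q (\<Psi>s b' a)) (\<Psi>s b' a)) ` obj B"
  have T: "?T \<subseteq> qhom Q (ty A a) (ty B b)"
    using assms by (auto intro!: closed)
  have U: "?U \<subseteq> qhom Q (ty A a) (ty A a)"
    by (auto intro: closed)
  have \<Psi>U: "(qcomp Q (\<Psi> b a)) ` ?U \<subseteq> qhom Q (ty A a) (ty B b)"
    using assms by (auto intro!: closed)
  have "qle Q (\<Psi> b a) (qcomp Q (\<Psi> b a) (qsup Q (ty A a) (ty A a) ?U))"
    using assms by (intro le_comp_of_id_le[OF \<Psi>_closed sup_closed[OF U] sym_left_adjoint_unit])
  also have "qcomp Q (\<Psi> b a) (qsup Q (ty A a) (ty A a) ?U)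
           = qsup Q (ty A a) (ty B b) ((qcomp Q (\<Psi> b a)) ` ?U)"
    using assms by (intro comp_sup_left U closed)
  finally have le_sup_U: "qle Q (\<Psi> b a) (qsup Q (ty A a) (ty B b) ((qcomp Q (\<Psi> b a)) ` ?U))" .
  have sup_U_le: "qle Q (qsup Q (ty A a) (ty B b) ((qcomp Q (\<Psi> b a)) ` ?U)) (qsup Q (ty A a) (ty B b) ?T)"
    using assms by (intro sup_le_sup[OF \<Psi>U T]) (blast intro: comp_inv_symdist_symdist_le)
  have sup_T_le: "qle Q (qsup Q (ty A a) (ty B b) ?T) (\<Psi> b a)"
    using assms by (intro sup_least[OF T]) (auto intro: closed symdist_conjugate_le)
  show ?thesis
    using assms by (intro qle_antisym[OF _ sup_closed[OF T] _ sup_T_le]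
        qle_trans[OF _ sup_closed[OF \<Psi>U] sup_closed[OF T] le_sup_U sup_U_le] closed)
qed

end

theorem lemma3p5:
  fixes Q :: "('o, 'm, 'z) quantaloid_scheme"
    and A :: "('a, 'o, 'm) qcat" and B :: "('b, 'o, 'm) qcat"
    and \<Psi> :: "'b \<Rightarrow> 'a \<Rightarrow> 'm" and \<Psi>' :: "'a \<Rightarrow> 'b \<Rightarrow> 'm"
  assumes "involutive_quantaloid Q"
    and "qcategory Q A" and "qcategory Q B"
    and "distributor Q A B \<Psi>" and "distributor Q B A \<Psi>'"
    and "dadjoint Q A B \<Psi> \<Psi>'"
  shows "dle Q (symcat Q B) (symcat Q B)
           (dcomp Q (symcat Q B) (symcat Q A) (symcat Q B)
              (symdist Q A B \<Psi> \<Psi>') (dinv Q (symdist Q A B \<Psi> \<Psi>')))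
           (hm (symcat Q B))
       \<and> (sym_left_adjoint Q (symcat Q A) (symcat Q B) (symdist Q A B \<Psi> \<Psi>') \<longleftrightarrow>
           dle Q (symcat Q A) (symcat Q A) (hm (symcat Q A))
             (dcomp Q (symcat Q A) (symcat Q B) (symcat Q A)
                (dinv Q (symdist Q A B \<Psi> \<Psi>')) (symdist Q A B \<Psi> \<Psi>')))
       \<and> (sym_left_adjoint Q (symcat Q A) (symcat Q B) (symdist Q A B \<Psi> \<Psi>') \<longrightarrow>
           (\<forall>a\<in>obj A. \<forall>b\<in>obj B.
              \<Psi> b a = qsup Q (ty A a) (ty B b)
                {qcomp Q (hm B b b') (qcomp Q (symdist Q A B \<Psi> \<Psi>' b' a') (hm A a' a)) | a' b'.
                   a' \<in> obj A \<and> b' \<in> obj B}))"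
proof -
  interpret adjoint_distributors Q A B \<Psi> \<Psi>'
    using assms by unfold_locales
  show ?thesis
    using symdist_comp_dinv_le sym_left_adjoint_symdist_iff sym_left_adjoint_factorisation by blast
qed

end
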